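(* Let $Q$ be a connected quiver and $\Lambda=kQ/\langle Z\rangle$ a finite dimensional monomial algebra. (i) The center of the Lie algebra $L_0$ is spanned by the elements $\sum_{a\in C}(a,a)$, where $C$ runs over the connected components of the classes of parallel arrows of $Q$. (ii) If $k$ has characteristic $0$ or $Q$ has no oriented cycle, then the center of $\operatorname{H}^1(\Lambda,\Lambda)$ is contained in the center of $L_0$.
   Context: $k$ is an algebraically closed field, $Q$ a finite quiver; $Q_n$ = paths of length $n$ ($Q_0$ vertices, $Q_1$ arrows), $s,t$ = source, terminus. $Z$ is a minimal set of paths of length $\ge2$ (no proper subpath of an element of $Z$ lies in $Z$), $\Lambda=kQ/\langle Z\rangle$ finite dimensional; $B$ = paths (vertices included) containing no element of $Z$ as subpath, $B_n=B\cap Q_n$. Paths are parallel if they have the same source and terminus; $X//Y$ = pairs of parallel paths in $X\times Y$; $k(X//Y)$ the vector space with that basis. For a path $\varepsilon$ and $(a,\gamma)\in Q_1//B$, $\varepsilon^{(a,\gamma)}$ = sum of all paths in $B$ obtained by replacing one occurrence of $a$ in $\varepsilon$ by $\gamma$ ($0$ if none); $(\eta,\varepsilon^{(a,\gamma)})=\sum_i(\eta,\varepsilon_i)$ if $\varepsilon^{(a,\gamma)}=\sum_i\varepsilon_i$. $\psi_0:k(Q_0//B)\to k(Q_1//B)$, $(e,\gamma)\mapsto\sum_{a\in Q_1,\,s(a)=e,\,a\gamma\in B}(a,a\gamma)-\sum_{a\in Q_1,\,t(a)=e,\,\gamma a\in B}(a,\gamma a)$; $\psi_1:k(Q_1//B)\to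 k(Z//B)$, $(a,\gamma)\mapsto\sum_{p\in Z}(p,p^{(a,\gamma)})$. With the bracket $[(a,\gamma),(b,\varepsilon)]=(b,\varepsilon^{(a,\gamma)})-(a,\gamma^{(b,\varepsilon)})$, $\operatorname{H}^1(\Lambda,\Lambda)\cong\operatorname{Ker}\psi_1/\operatorname{Im}\psi_0$ as Lie algebras. $L_0$ is the Lie subalgebra formed by the classes of elements of $k(Q_1//Q_1)\cap\operatorname{Ker}\psi_1$; for $(a,b)\in Q_1//Q_1\cap\operatorname{Ker}\psi_1$, $(a,b)$ also denotes its class. For parallel arrows: $a\le_{\langle Z\rangle}b$ iff $p^{(b,a)}=0$ for all $p\in Z$. Classes of parallel arrows are the equivalence classes of parallelism on $Q_1$. A subset $C$ of a class $\bar\alpha$ is connected if any two arrows of $C$ can be joined by a sequence of arrows of $C$ in which any two consecutive ones $\alpha_i,\alpha_{i+1}$ satisfy $\alpha_i\le_{\langle Z\rangle}\alpha_{i+1}$ or $\alpha_{i+1}\le_{\langle Z\rangle}\alpha_i$; connected components are the maximal connected subsets (they partition $\bar\alpha$). *)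

theory Defs
  imports "HOL-Computational_Algebra.Polynomial" "HOL-Library.Sublist"
begin

record ('v, 'a) quiver =
  verts :: "'v set"
  arrs  :: "'a set"
  src   :: "'a \<Rightarrow> 'v"
  tgt   :: "'a \<Rightarrow> 'v"

text \<open>A path is a pair (v, as): as = [a_n, ..., a_1] is the list of arrows written
  in composition order (a_1 is traversed first), v is the source vertex.
  The trivial path at the vertex v is (v, []).\<close>
type_synonym ('v, 'a) path = "'v \<times> 'a list"

definition finite_quiver :: "('v, 'a) quiver \<Rightarrow> bool" where
  "finite_quiver Q \<longleftrightarrow> finite (verts Q) \<and> finite (arrs Q) \<and>
     (\<forall>a\<in>arrs Q. src Q a \<in> verts Q \<and> tgt Q a \<in> verts Q)"

definition is_path :: "('v, 'a) quiver \<Rightarrow> ('v, 'a) path \<Rightarrow> bool" where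
  "is_path Q p \<longleftrightarrow> fst p \<in> verts Q \<and> set (snd p) \<subseteq> arrs Q \<and>
     (snd p \<noteq> [] \<longrightarrow> fst p = src Q (last (snd p))) \<and>
     (\<forall>i. Suc i < length (snd p) \<longrightarrow> src Q (snd p ! i) = tgt Q (snd p ! Suc i))"

definition psrc :: "('v, 'a) path \<Rightarrow> 'v" where
  "psrc p = fst p"

definition ptgt :: "('v, 'a) quiver \<Rightarrow> ('v, 'a) path \<Rightarrow> 'v" where
  "ptgt Q p = (if snd p = [] then fst p else tgt Q (hd (snd p)))"

definition vpath :: "'v \<Rightarrow> ('v, 'a) path" where
  "vpath v = (v, [])"

definition apath :: "('v, 'a) quiver \<Rightarrow> 'a \<Rightarrow> ('v, 'a) path" where
  "apath Q a = (src Q a, [a])"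

definition Q0 :: "('v, 'a) quiver \<Rightarrow> ('v, 'a) path set" where
  "Q0 Q = vpath ` verts Q"

definition Q1 :: "('v, 'a) quiver \<Rightarrow> ('v, 'a) path set" where
  "Q1 Q = apath Q ` arrs Q"

definition parallel :: "('v, 'a) quiver \<Rightarrow> ('v, 'a) path \<Rightarrow> ('v, 'a) path \<Rightarrow> bool" where
  "parallel Q p q \<longleftrightarrow> psrc p = psrc q \<and> ptgt Q p = ptgt Q q"

definition par :: "('v, 'a) quiver \<Rightarrow> ('v, 'a) path set \<Rightarrow> ('v, 'a) path set
    \<Rightarrow> (('v, 'a) path \<times> ('v, 'a) path) set" where
  "par Q X Y = {(p, q). p \<in> X \<and> q \<in> Y \<and> parallel Q p q}"

definition connected_quiver :: "('v, 'a) quiver \<Rightarrow> bool" where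
  "connected_quiver Q \<longleftrightarrow> verts Q \<noteq> {} \<and>
     (\<forall>u\<in>verts Q. \<forall>v\<in>verts Q.
        (u, v) \<in> ({(src Q a, tgt Q a) | a. a \<in> arrs Q} \<union> {(tgt Q a, src Q a) | a. a \<in> arrs Q})\<^sup>*)"

definition has_oriented_cycle :: "('v, 'a) quiver \<Rightarrow> bool" where
  "has_oriented_cycle Q \<longleftrightarrow> (\<exists>p. is_path Q p \<and> snd p \<noteq> [] \<and> psrc p = ptgt Q p)"

definition admissible_Z :: "('v, 'a) quiver \<Rightarrow> ('v, 'a) path set \<Rightarrow> bool" where
  "admissible_Z Q Z \<longleftrightarrow> (\<forall>z\<in>Z. is_path Q z \<and> length (snd z) \<ge> 2) \<and>
     (\<forall>z\<in>Z. \<forall>z'\<in>Z. sublist (snd z') (snd z) \<longrightarrow> z' = z)"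

definition Bset :: "('v, 'a) quiver \<Rightarrow> ('v, 'a) path set \<Rightarrow> ('v, 'a) path set" where
  "Bset Q Z = {p. is_path Q p \<and> \<not> (\<exists>z\<in>Z. sublist (snd z) (snd p))}"

text \<open>Multiplicity of the path q in eps^(a,gamma): number of occurrences of the
  arrow a in eps whose replacement by gamma yields q, with q in B.\<close>
definition repl_count :: "('v, 'a) quiver \<Rightarrow> ('v, 'a) path set \<Rightarrow> ('v, 'a) path
    \<Rightarrow> 'a \<Rightarrow> ('v, 'a) path \<Rightarrow> ('v, 'a) path \<Rightarrow> nat" where
  "repl_count Q Z eps a gam q = card {i. i < length (snd eps) \<and> snd eps ! i = a \<and>
     q = (fst eps, take i (snd eps) @ snd gam @ drop (Suc i) (snd eps)) \<and> q \<in> Bset Q Z}"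

definition kspace :: "('v, 'a) quiver \<Rightarrow> ('v, 'a) path set \<Rightarrow> ('v, 'a) path set
    \<Rightarrow> (('v, 'a) path \<times> ('v, 'a) path \<Rightarrow> 'k::field) set" where
  "kspace Q X Y = {f. \<forall>u. u \<notin> par Q X Y \<longrightarrow> f u = 0}"

definition delta :: "'b \<Rightarrow> 'b \<Rightarrow> 'k::field" where
  "delta u w = (if w = u then 1 else 0)"

text \<open>psi_0 on a basis element (e, gamma): paths compose right to left, a gamma
  means gamma followed by a.\<close>
definition psi0b :: "('v, 'a) quiver \<Rightarrow> ('v, 'a) path set \<Rightarrow> ('v, 'a) path \<Rightarrow> ('v, 'a) path
    \<Rightarrow> ('v, 'a) path \<times> ('v, 'a) path \<Rightarrow> 'k::field" where
  "psi0b Q Z e gam w =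
     (\<Sum>a\<in>{a\<in>arrs Q. src Q a = fst e \<and> (fst gam, a # snd gam) \<in> Bset Q Z}.
         delta (apath Q a, (fst gam, a # snd gam)) w)
   - (\<Sum>a\<in>{a\<in>arrs Q. tgt Q a = fst e \<and> (src Q a, snd gam @ [a]) \<in> Bset Q Z}.
         delta (apath Q a, (src Q a, snd gam @ [a])) w)"

definition psi0 :: "('v, 'a) quiver \<Rightarrow> ('v, 'a) path set
    \<Rightarrow> (('v, 'a) path \<times> ('v, 'a) path \<Rightarrow> 'k::field)
    \<Rightarrow> (('v, 'a) path \<times> ('v, 'a) path \<Rightarrow> 'k)" where
  "psi0 Q Z f = (\<lambda>w. \<Sum>u\<in>par Q (Q0 Q) (Bset Q Z). f u * psi0b Q Z (fst u) (snd u) w)"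

definition psi1b :: "('v, 'a) quiver \<Rightarrow> ('v, 'a) path set \<Rightarrow> ('v, 'a) path \<Rightarrow> ('v, 'a) path
    \<Rightarrow> ('v, 'a) path \<times> ('v, 'a) path \<Rightarrow> 'k::field" where
  "psi1b Q Z a gam w =
     (if fst w \<in> Z then of_nat (repl_count Q Z (fst w) (hd (snd a)) gam (snd w)) else 0)"

definition psi1 :: "('v, 'a) quiver \<Rightarrow> ('v, 'a) path set
    \<Rightarrow> (('v, 'a) path \<times> ('v, 'a) path \<Rightarrow> 'k::field)
    \<Rightarrow> (('v, 'a) path \<times> ('v, 'a) path \<Rightarrow> 'k)" where
  "psi1 Q Z f = (\<lambda>w. \<Sum>u\<in>par Q (Q1 Q) (Bset Q Z). f u * psi1b Q Z (fst u) (snd u) w)"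

definition bracketb :: "('v, 'a) quiver \<Rightarrow> ('v, 'a) path set
    \<Rightarrow> ('v, 'a) path \<times> ('v, 'a) path \<Rightarrow> ('v, 'a) path \<times> ('v, 'a) path
    \<Rightarrow> ('v, 'a) path \<times> ('v, 'a) path \<Rightarrow> 'k::field" where
  "bracketb Q Z u v w =
     (if fst w = fst v then of_nat (repl_count Q Z (snd v) (hd (snd (fst u))) (snd u) (snd w)) else 0)
   - (if fst w = fst u then of_nat (repl_count Q Z (snd u) (hd (snd (fst v))) (snd v) (snd w)) else 0)"

definition bracket :: "('v, 'a) quiver \<Rightarrow> ('v, 'a) path set
    \<Rightarrow> (('v, 'a) path \<times> ('v, 'a) path \<Rightarrow> 'k::field)
    \<Rightarrow> (('v, 'a) path \<times> ('v, 'a) path \<Rightarrow> 'k)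
    \<Rightarrow> (('v, 'a) path \<times> ('v, 'a) path \<Rightarrow> 'k)" where
  "bracket Q Z x y = (\<lambda>w. \<Sum>u\<in>par Q (Q1 Q) (Bset Q Z). \<Sum>v\<in>par Q (Q1 Q) (Bset Q Z).
       x u * y v * bracketb Q Z u v w)"

definition KerPsi1 :: "('v, 'a) quiver \<Rightarrow> ('v, 'a) path set
    \<Rightarrow> (('v, 'a) path \<times> ('v, 'a) path \<Rightarrow> 'k::field) set" where
  "KerPsi1 Q Z = {f \<in> kspace Q (Q1 Q) (Bset Q Z). psi1 Q Z f = (\<lambda>_. 0)}"

definition ImPsi0 :: "('v, 'a) quiver \<Rightarrow> ('v, 'a) path set
    \<Rightarrow> (('v, 'a) path \<times> ('v, 'a) path \<Rightarrow> 'k::field) set" where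
  "ImPsi0 Q Z = psi0 Q Z ` kspace Q (Q0 Q) (Bset Q Z)"

definition L0rep :: "('v, 'a) quiver \<Rightarrow> ('v, 'a) path set
    \<Rightarrow> (('v, 'a) path \<times> ('v, 'a) path \<Rightarrow> 'k::field) set" where
  "L0rep Q Z = kspace Q (Q1 Q) (Q1 Q) \<inter> KerPsi1 Q Z"

text \<open>The class of x lies in the center of H^1 = Ker psi_1 / Im psi_0.\<close>
definition central_H1 :: "('v, 'a) quiver \<Rightarrow> ('v, 'a) path set
    \<Rightarrow> (('v, 'a) path \<times> ('v, 'a) path \<Rightarrow> 'k::field) \<Rightarrow> bool" where
  "central_H1 Q Z x \<longleftrightarrow> x \<in> KerPsi1 Q Z \<and>
     (\<forall>y\<in>KerPsi1 Q Z. bracket Q Z x y \<in> ImPsi0 Q Z)"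

definition central_L0 :: "('v, 'a) quiver \<Rightarrow> ('v, 'a) path set
    \<Rightarrow> (('v, 'a) path \<times> ('v, 'a) path \<Rightarrow> 'k::field) \<Rightarrow> bool" where
  "central_L0 Q Z x \<longleftrightarrow> x \<in> L0rep Q Z \<and>
     (\<forall>y\<in>L0rep Q Z. bracket Q Z x y \<in> ImPsi0 Q Z)"

definition arrow_le :: "('v, 'a) quiver \<Rightarrow> ('v, 'a) path set \<Rightarrow> 'a \<Rightarrow> 'a \<Rightarrow> bool" where
  "arrow_le Q Z a b \<longleftrightarrow> a \<in> arrs Q \<and> b \<in> arrs Q \<and> parallel Q (apath Q a) (apath Q b) \<and>
     (\<forall>p\<in>Z. \<forall>q. repl_count Q Z p b (apath Q a) q = 0)"

definition arrow_class :: "('v, 'a) quiver \<Rightarrow> 'a \<Rightarrow> 'a set" where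
  "arrow_class Q a = {b \<in> arrs Q. parallel Q (apath Q a) (apath Q b)}"

definition connected_arrows :: "('v, 'a) quiver \<Rightarrow> ('v, 'a) path set \<Rightarrow> 'a set \<Rightarrow> bool" where
  "connected_arrows Q Z C \<longleftrightarrow> (\<forall>a\<in>C. \<forall>b\<in>C.
     (a, b) \<in> {(x, y). x \<in> C \<and> y \<in> C \<and> (arrow_le Q Z x y \<or> arrow_le Q Z y x)}\<^sup>*)"

definition arrow_components :: "('v, 'a) quiver \<Rightarrow> ('v, 'a) path set \<Rightarrow> 'a set set" where
  "arrow_components Q Z = {C. \<exists>a\<in>arrs Q. C \<subseteq> arrow_class Q a \<and> C \<noteq> {} \<and>
     connected_arrows Q Z C \<and>
     (\<forall>D. C \<subseteq> D \<and> D \<subseteq> arrow_class Q a \<and> connected_arrows Q Z D \<longrightarrow> D = C)}"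

definition comp_sum :: "('v, 'a) quiver \<Rightarrow> 'a set
    \<Rightarrow> (('v, 'a) path \<times> ('v, 'a) path \<Rightarrow> 'k::field)" where
  "comp_sum Q C = (\<lambda>w. \<Sum>a\<in>C. delta (apath Q a, apath Q a) w)"

end

theory Submission
  imports Defs
begin

text \<open>
  Grade k(Q_1//B) by the multidegree: the c-degree of (b, \<gamma>) is the number of occurrences
  of c in \<gamma> minus that in b. The image of psi_0 is spanned by homogeneous elements of
  nonnegative degree, and bracketing with the loop (c, c) multiplies every basis element by minus
  its c-degree. The loops (b, b) and the pairs (b, e) with e \<le> b lie in L_0. Bracketing a central x
  of L_0 with (b, b) reproduces its off-diagonal coefficients x(b, e), which must vanish because
  (b, e) has negative b-degree; bracketing with (b, e) gives x(e, e) - x(b, b) at (b, e), so the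
  diagonal of x is constant along \<le> and hence on connected components. Conversely, such diagonal
  elements commute with L_0, since a coefficient (b, e) of an element of L_0 is nonzero only when
  e \<le> b. For a central x of H^1, every off-diagonal basis element has nonzero multidegree; in
  characteristic 0, or when the absence of oriented cycles forces the b-degree of (b, \<gamma>) to be -1,
  some coordinate is nonzero in k, so every homogeneous component of x off the diagonal is a
  multiple of a bracket of x with a loop and lies in the image of psi_0.
\<close>

lemma card_nth_eq_count_list: "card {i. i < length xs \<and> xs ! i = a} = count_list xs a"
proof (induction xs)
  case (Cons x xs)
  have "{i. i < length (x # xs) \<and> (x # xs) ! i = a} =
      (if x = a then {0} else {}) \<union> Suc ` {i. i < length xs \<and> xs ! i = a}"
  proof (rule set_eqI)
    fix i
    show "i \<in> {i. i < length (x # xs) \<and> (x # xs) ! i = a} \<longleftrightarrow>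
        i \<in> (if x = a then {0} else {}) \<union> Suc ` {i. i < length xs \<and> xs ! i = a}"
      by (cases i) auto
  qed
  then show ?case using Cons by (simp add: card_image)
qed simp

lemma eq_singleton_if_count_list_eq:
  assumes "\<And>c. count_list xs c = count_list [b] c"
  shows "xs = [b]"
proof -
  have "mset xs = mset [b]" unfolding multiset_eq_iff count_mset using assms by blast
  then show ?thesis by simp
qed

lemma list_update_eq_list_updateD:
  assumes "i < length xs" "j < length xs" "xs ! i \<noteq> y" "xs[i := y] = xs[j := y']"
  shows "i = j \<and> y = y'"
proof -
  have "i = j"
  proof (rule ccontr)
    assume "i \<noteq> j"
    then have "xs[j := y'] ! i = xs ! i" by simp
    moreover have "xs[i := y] ! i = y" using assms(1) by simp
    ultimately show False using assms(3,4) by simp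
  qed
  then show ?thesis using assms by (metis nth_list_update_eq)
qed

lemma is_path_suffix:
  assumes "is_path Q (v, xs @ ys)" "ys \<noteq> []"
  shows "is_path Q (v, ys)"
  unfolding is_path_def
proof (intro conjI allI impI)
  fix i assume "Suc i < length (snd (v, ys))"
  then have "Suc (length xs + i) < length (xs @ ys)" by simp
  with assms(1) have "src Q ((xs @ ys) ! (length xs + i)) = tgt Q ((xs @ ys) ! Suc (length xs + i))"
    unfolding is_path_def by (metis snd_conv)
  then show "src Q (snd (v, ys) ! i) = tgt Q (snd (v, ys) ! Suc i)"
    by (simp add: nth_append)
qed (use assms in \<open>auto simp: is_path_def\<close>)

lemma is_path_prefix:
  assumes "is_path Q (v, xs @ b # ys)" "xs \<noteq> []" "tgt Q b \<in> verts Q"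
  shows "is_path Q (tgt Q b, xs)"
  unfolding is_path_def
proof (intro conjI allI impI)
  have "Suc (length xs - 1) < length (xs @ b # ys)" using assms(2) by simp
  with assms(1) have "src Q ((xs @ b # ys) ! (length xs - 1)) = tgt Q ((xs @ b # ys) ! Suc (length xs - 1))"
    unfolding is_path_def by (metis snd_conv)
  then have "src Q (xs ! (length xs - 1)) = tgt Q b"
    using assms(2) by (simp add: nth_append)
  then show "fst (tgt Q b, xs) = src Q (last (snd (tgt Q b, xs)))"
    using assms(2) by (simp add: last_conv_nth)
  fix i assume "Suc i < length (snd (tgt Q b, xs))"
  then have "Suc i < length (xs @ b # ys)" "Suc i < length xs" by simp_all
  with assms(1) have "src Q ((xs @ b # ys) ! i) = tgt Q ((xs @ b # ys) ! Suc i)"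
    unfolding is_path_def by (metis snd_conv)
  then show "src Q (snd (tgt Q b, xs) ! i) = tgt Q (snd (tgt Q b, xs) ! Suc i)"
    using \<open>Suc i < length xs\<close> by (simp add: nth_append)
qed (use assms in \<open>auto simp: is_path_def\<close>)

lemma sum_delta_mult:
  "finite S \<Longrightarrow> (\<Sum>u\<in>S. delta v u * f u) = (if v \<in> S then f v else 0)"
  by (simp add: delta_def if_distrib[of "\<lambda>t. t * _"] cong: if_cong)

locale monomial_algebra =
  fixes Q :: "('v, 'a) quiver" and Z :: "('v, 'a) path set"
  assumes finite_quiver: "finite_quiver Q"
    and admissible: "admissible_Z Q Z"
    and finite_B: "finite (Bset Q Z)"
begin

abbreviation B where "B \<equiv> Bset Q Z"

lemma apath_eq_iff [simp]: "apath Q a = apath Q b \<longleftrightarrow> a = b"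
  by (auto simp: apath_def)

lemma apath_simps [simp]:
  "fst (apath Q a) = src Q a" "snd (apath Q a) = [a]" "hd (snd (apath Q a)) = a"
  "psrc (apath Q a) = src Q a" "ptgt Q (apath Q a) = tgt Q a"
  by (simp_all add: apath_def psrc_def ptgt_def)

lemma parallel_apath_iff:
  "parallel Q (apath Q a) (apath Q b) \<longleftrightarrow> src Q a = src Q b \<and> tgt Q a = tgt Q b"
  by (simp add: parallel_def)

lemma apath_in_Bset: "a \<in> arrs Q \<Longrightarrow> apath Q a \<in> B"
proof -
  assume a: "a \<in> arrs Q"
  have "is_path Q (apath Q a)"
    using a finite_quiver by (auto simp: is_path_def apath_def finite_quiver_def)
  moreover have "\<not> sublist (snd z) [a]" if "z \<in> Z" for z
  proof
    assume "sublist (snd z) [a]"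
    then have "length (snd z) \<le> 1" using sublist_length_le by fastforce
    with that admissible show False by (auto simp: admissible_Z_def)
  qed
  ultimately show ?thesis by (auto simp: Bset_def)
qed

lemma Z_notin_Bset: "p \<in> Z \<Longrightarrow> p \<notin> B"
  by (auto simp: Bset_def)

lemma apath_in_Q1_iff [simp]: "apath Q b \<in> Q1 Q \<longleftrightarrow> b \<in> arrs Q"
  by (auto simp: Q1_def)

lemma arrow_pair_in_par:
  assumes "b \<in> arrs Q" "e \<in> arrs Q" "src Q b = src Q e" "tgt Q b = tgt Q e"
  shows "(apath Q b, apath Q e) \<in> par Q (Q1 Q) (Q1 Q)" "(apath Q b, apath Q e) \<in> par Q (Q1 Q) B"
  using assms apath_in_Bset by (auto simp: par_def parallel_def)

lemma par_Q1_Q1_E: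
  assumes "u \<in> par Q (Q1 Q) (Q1 Q)"
  obtains b e where "u = (apath Q b, apath Q e)" "b \<in> arrs Q" "e \<in> arrs Q"
    "src Q b = src Q e" "tgt Q b = tgt Q e"
  using assms by (auto simp: par_def Q1_def parallel_def)

lemma par_Q1_B_E:
  assumes "u \<in> par Q (Q1 Q) B"
  obtains a gam where "u = (apath Q a, gam)" "a \<in> arrs Q" "gam \<in> B"
    "fst gam = src Q a" "ptgt Q gam = tgt Q a"
  using assms by (auto simp: par_def Q1_def parallel_def psrc_def)

lemma finite_par_Q1_B: "finite (par Q (Q1 Q) B)"
proof (rule finite_subset)
  show "par Q (Q1 Q) B \<subseteq> Q1 Q \<times> B" by (auto simp: par_def)
  show "finite (Q1 Q \<times> B)" using finite_quiver finite_B by (simp add: Q1_def finite_quiver_def)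
qed

lemma kspace_vanishes: "f \<in> kspace Q X Y \<Longrightarrow> u \<notin> par Q X Y \<Longrightarrow> f u = 0"
  unfolding kspace_def by blast

lemma delta_in_kspace: "v \<in> par Q X Y \<Longrightarrow> delta v \<in> kspace Q X Y"
  by (auto simp: kspace_def delta_def)

lemma repl_count_apath:
  "repl_count Q Z (apath Q e) a gam q = (if e = a \<and> q = (src Q e, snd gam) \<and> q \<in> B then 1 else 0)"
proof -
  have I: "{i. i < length (snd (apath Q e)) \<and> snd (apath Q e) ! i = a \<and>
      q = (fst (apath Q e), take i (snd (apath Q e)) @ snd gam @ drop (Suc i) (snd (apath Q e))) \<and>
      q \<in> B} = (if e = a \<and> q = (src Q e, snd gam) \<and> q \<in> B then {0} else {})"
    by (cases "e = a") (auto simp: apath_def)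
  have "card (if P then {0::nat} else {}) = (if P then 1 else 0)" for P by simp
  then show ?thesis unfolding repl_count_def I .
qed

lemma repl_count_by_itself:
  "repl_count Q Z eps a (apath Q a) q = (if q = eps \<and> eps \<in> B then count_list (snd eps) a else 0)"
proof -
  have I: "{i. i < length (snd eps) \<and> snd eps ! i = a \<and>
      q = (fst eps, take i (snd eps) @ snd (apath Q a) @ drop (Suc i) (snd eps)) \<and> q \<in> B}
    = (if q = eps \<and> eps \<in> B then {i. i < length (snd eps) \<and> snd eps ! i = a} else {})"
    by (auto simp: apath_def) (metis append_Cons append_Nil id_take_nth_drop prod.collapse)+
  show ?thesis unfolding repl_count_def I if_distrib[of card] card.empty card_nth_eq_count_list ..
qed

lemma repl_count_by_arrow:
  "repl_count Q Z p b (apath Q e) q =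
     card {i. i < length (snd p) \<and> snd p ! i = b \<and> q = (fst p, (snd p)[i := e]) \<and> q \<in> B}"
  unfolding repl_count_def
  by (intro arg_cong[of _ _ card] Collect_cong conj_cong refl) (simp add: upd_conv_take_nth_drop)

lemma repl_count_nonzeroE:
  assumes "repl_count Q Z eps a gam q \<noteq> 0"
  obtains i where "i < length (snd eps)" "snd eps ! i = a"
    "q = (fst eps, take i (snd eps) @ snd gam @ drop (Suc i) (snd eps))" "q \<in> B"
proof -
  have "{i. i < length (snd eps) \<and> snd eps ! i = a \<and>
      q = (fst eps, take i (snd eps) @ snd gam @ drop (Suc i) (snd eps)) \<and> q \<in> B} \<noteq> {}"
    using assms unfolding repl_count_def by (metis card.empty)
  then show thesis using that by blast
qed

lemma repl_count_by_arrow_nonzeroE: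
  assumes "repl_count Q Z p b (apath Q e) q \<noteq> 0"
  obtains i where "i < length (snd p)" "snd p ! i = b" "q = (fst p, (snd p)[i := e])" "q \<in> B"
  using assms
proof (rule repl_count_nonzeroE)
  fix i assume "i < length (snd p)" "snd p ! i = b"
    "q = (fst p, take i (snd p) @ snd (apath Q e) @ drop (Suc i) (snd p))" "q \<in> B"
  then show thesis using that by (simp add: upd_conv_take_nth_drop)
qed

lemma repl_count_by_arrow_unique:
  assumes "repl_count Q Z p b (apath Q e) q \<noteq> 0" "b \<noteq> e"
    and "repl_count Q Z p b' (apath Q e') q \<noteq> 0"
  shows "b' = b \<and> e' = e"
proof -
  obtain i where i: "i < length (snd p)" "snd p ! i = b" "q = (fst p, (snd p)[i := e])"
    using assms(1) by (rule repl_count_by_arrow_nonzeroE)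
  obtain j where j: "j < length (snd p)" "snd p ! j = b'" "q = (fst p, (snd p)[j := e'])"
    using assms(3) by (rule repl_count_by_arrow_nonzeroE)
  have "(snd p)[i := e] = (snd p)[j := e']" using i(3) j(3) by simp
  then have "i = j \<and> e = e'" using i(1,2) j(1) assms(2) list_update_eq_list_updateD by metis
  then show ?thesis using i(2) j(2) by simp
qed

lemma repl_count_by_arrow_eq_1:
  assumes "repl_count Q Z p b (apath Q e) q \<noteq> 0" "b \<noteq> e"
  shows "repl_count Q Z p b (apath Q e) q = 1"
proof -
  let ?I = "{i. i < length (snd p) \<and> snd p ! i = b \<and> q = (fst p, (snd p)[i := e]) \<and> q \<in> B}"
  obtain i where i: "i < length (snd p)" "snd p ! i = b" "q = (fst p, (snd p)[i := e])" "q \<in> B"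
    using assms(1) by (rule repl_count_by_arrow_nonzeroE)
  have "j = i" if "j \<in> ?I" for j
  proof -
    from that have "j < length (snd p)" "snd p ! j = b" "(snd p)[j := e] = (snd p)[i := e]"
      using i(3) by simp_all
    then show "j = i" using list_update_eq_list_updateD[of j "snd p" i e e] i(1) assms(2) by blast
  qed
  then have "?I = {i}" using i by blast
  then show ?thesis unfolding repl_count_by_arrow by simp
qed

subsection \<open>Multidegree and the image of psi_0\<close>

definition deg :: "('v, 'a) path \<times> ('v, 'a) path \<Rightarrow> 'a \<Rightarrow> int" where
  "deg w c = int (count_list (snd (snd w)) c) - int (count_list (snd (fst w)) c)"

definition degree_part :: "('a \<Rightarrow> int) \<Rightarrow> (('v, 'a) path \<times> ('v, 'a) path \<Rightarrow> 'k::field)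
    \<Rightarrow> ('v, 'a) path \<times> ('v, 'a) path \<Rightarrow> 'k" where
  "degree_part d f w = (if deg w = d then f w else 0)"

lemma deg_arrow_pair: "deg (apath Q b, apath Q e) c = (if e = c then 1 else 0) - (if b = c then 1 else 0)"
  by (simp add: deg_def)

lemma ImPsi0I: "f \<in> kspace Q (Q0 Q) B \<Longrightarrow> psi0 Q Z f = g \<Longrightarrow> g \<in> ImPsi0 Q Z"
  unfolding ImPsi0_def by blast

lemma ImPsi0_zero: "(\<lambda>_. 0::'k::field) \<in> ImPsi0 Q Z"
  by (rule ImPsi0I[of "\<lambda>_. 0"]) (auto simp: kspace_def psi0_def)

lemma ImPsi0_add:
  fixes g1 g2 :: "_ \<Rightarrow> 'k::field"
  assumes "g1 \<in> ImPsi0 Q Z" "g2 \<in> ImPsi0 Q Z"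
  shows "(\<lambda>w. g1 w + g2 w) \<in> ImPsi0 Q Z"
proof -
  obtain f1 f2 where f: "f1 \<in> kspace Q (Q0 Q) B" "g1 = psi0 Q Z f1"
    "f2 \<in> kspace Q (Q0 Q) B" "g2 = psi0 Q Z f2"
    using assms by (auto simp: ImPsi0_def)
  show ?thesis
    by (rule ImPsi0I[of "\<lambda>u. f1 u + f2 u"])
       (use f in \<open>auto simp: kspace_def psi0_def sum.distrib distrib_right\<close>)
qed

lemma ImPsi0_scale:
  fixes g :: "_ \<Rightarrow> 'k::field"
  assumes "g \<in> ImPsi0 Q Z"
  shows "(\<lambda>w. r * g w) \<in> ImPsi0 Q Z"
proof -
  obtain f where f: "f \<in> kspace Q (Q0 Q) B" "g = psi0 Q Z f" using assms by (auto simp: ImPsi0_def)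
  show ?thesis
    by (rule ImPsi0I[of "\<lambda>u. r * f u"])
       (use f in \<open>auto simp: kspace_def psi0_def sum_distrib_left mult.assoc\<close>)
qed

lemma ImPsi0_sum:
  fixes G :: "_ \<Rightarrow> _ \<Rightarrow> 'k::field"
  assumes "finite D" "\<And>d. d \<in> D \<Longrightarrow> G d \<in> ImPsi0 Q Z"
  shows "(\<lambda>w. \<Sum>d\<in>D. G d w) \<in> ImPsi0 Q Z"
  using assms
proof (induction D rule: finite_induct)
  case empty
  then show ?case using ImPsi0_zero by simp
next
  case (insert d D)
  then show ?case using ImPsi0_add[of "G d" "\<lambda>w. \<Sum>d\<in>D. G d w"] by simp
qed

lemma psi0b_nonzero_deg:
  assumes "psi0b Q Z e gam w \<noteq> (0::'k::field)"
  shows "deg w = (\<lambda>c. int (count_list (snd gam) c))"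
proof -
  obtain a where "delta (apath Q a, (fst gam, a # snd gam)) w \<noteq> (0::'k) \<or>
      delta (apath Q a, (src Q a, snd gam @ [a])) w \<noteq> (0::'k)"
    using assms unfolding psi0b_def
    by (metis (no_types, lifting) diff_self sum.not_neutral_contains_not_neutral)
  then have "w = (apath Q a, (fst gam, a # snd gam)) \<or> w = (apath Q a, (src Q a, snd gam @ [a]))"
    by (auto simp: delta_def split: if_splits)
  then show ?thesis by (auto simp: deg_def)
qed

lemma ImPsi0_nonzero_deg_nonneg:
  fixes g :: "_ \<Rightarrow> 'k::field"
  assumes "g \<in> ImPsi0 Q Z" "g w \<noteq> 0"
  shows "deg w c \<ge> 0"
proof -
  obtain f where "g = psi0 Q Z f" using assms(1) by (auto simp: ImPsi0_def)
  then have "(\<Sum>u\<in>par Q (Q0 Q) B. f u * psi0b Q Z (fst u) (snd u) w) \<noteq> 0"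
    using assms(2) by (simp add: psi0_def)
  then obtain u where "f u * psi0b Q Z (fst u) (snd u) w \<noteq> 0"
    by (rule sum.not_neutral_contains_not_neutral)
  then have "psi0b Q Z (fst u) (snd u) w \<noteq> (0::'k)" by simp
  then have "deg w = (\<lambda>c. int (count_list (snd (snd u)) c))" by (rule psi0b_nonzero_deg)
  then show ?thesis by simp
qed

lemma ImPsi0_vanishes_at_arrow_pair:
  fixes g :: "_ \<Rightarrow> 'k::field"
  assumes "g \<in> ImPsi0 Q Z" "b \<noteq> e"
  shows "g (apath Q b, apath Q e) = 0"
proof -
  have "deg (apath Q b, apath Q e) b < 0" using assms(2) by (simp add: deg_arrow_pair)
  moreover have "g (apath Q b, apath Q e) \<noteq> 0 \<Longrightarrow> deg (apath Q b, apath Q e) b \<ge> 0"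
    by (rule ImPsi0_nonzero_deg_nonneg[OF assms(1)])
  ultimately show ?thesis by linarith
qed

lemma ImPsi0_degree_part:
  fixes g :: "_ \<Rightarrow> 'k::field"
  assumes "g \<in> ImPsi0 Q Z"
  shows "degree_part d g \<in> ImPsi0 Q Z"
proof -
  obtain f where f: "f \<in> kspace Q (Q0 Q) B" "g = psi0 Q Z f" using assms by (auto simp: ImPsi0_def)
  define f' where "f' u = (if (\<lambda>c. int (count_list (snd (snd u)) c)) = d then f u else 0)" for u
  have "f' u * psi0b Q Z (fst u) (snd u) w = (if deg w = d then f u * psi0b Q Z (fst u) (snd u) w else 0)"
    for u w
    using psi0b_nonzero_deg[of "fst u" "snd u" w] by (auto simp: f'_def)
  then have "psi0 Q Z f' = degree_part d g"
    by (auto simp: psi0_def degree_part_def f(2))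
  moreover have "f' \<in> kspace Q (Q0 Q) B" using f(1) by (auto simp: kspace_def f'_def)
  ultimately show ?thesis using ImPsi0I by blast
qed

definition is_diagonal :: "(('v, 'a) path \<times> ('v, 'a) path \<Rightarrow> 'k::field) \<Rightarrow> bool" where
  "is_diagonal x \<longleftrightarrow> (\<forall>u. x u \<noteq> 0 \<longrightarrow> (\<exists>a\<in>arrs Q. u = (apath Q a, apath Q a)))"

definition le_invariant :: "(('v, 'a) path \<times> ('v, 'a) path \<Rightarrow> 'k::field) \<Rightarrow> bool" where
  "le_invariant x \<longleftrightarrow>
     (\<forall>b e. arrow_le Q Z e b \<longrightarrow> x (apath Q e, apath Q e) = x (apath Q b, apath Q b))"

lemma arrow_le_parallel:
  "arrow_le Q Z e b \<Longrightarrow> e \<in> arrs Q \<and> b \<in> arrs Q \<and> src Q e = src Q b \<and> tgt Q e = tgt Q b"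
  by (auto simp: arrow_le_def parallel_def)

lemma psi1b_loop: "psi1b Q Z (apath Q a) (apath Q a) w = 0"
  by (simp add: psi1b_def repl_count_by_itself Z_notin_Bset)

lemma arrow_le_refl:
  assumes "a \<in> arrs Q"
  shows "arrow_le Q Z a a"
proof -
  have "repl_count Q Z p a (apath Q a) q = 0" if "p \<in> Z" for p q
    using Z_notin_Bset[OF that] by (simp add: repl_count_by_itself)
  then show ?thesis using assms unfolding arrow_le_def parallel_apath_iff by blast
qed

lemma psi1_delta:
  "psi1 Q Z (delta v) w = (if v \<in> par Q (Q1 Q) B then psi1b Q Z (fst v) (snd v) w else 0)"
  unfolding psi1_def using finite_par_Q1_B by (simp add: sum_delta_mult)

lemma psi1_diagonal:
  assumes "is_diagonal x"
  shows "psi1 Q Z x = (\<lambda>_. 0)"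
proof
  fix w
  have "x u * psi1b Q Z (fst u) (snd u) w = 0" for u
  proof (cases "x u = 0")
    case False
    then obtain a where "u = (apath Q a, apath Q a)" using assms unfolding is_diagonal_def by blast
    then show ?thesis by (simp add: psi1b_loop)
  qed simp
  then show "psi1 Q Z x w = 0" unfolding psi1_def by (simp del: mult_eq_0_iff)
qed

lemma diagonal_in_L0rep:
  assumes "is_diagonal x"
  shows "x \<in> L0rep Q Z" "x \<in> kspace Q (Q1 Q) B"
proof -
  have diag_par: "u \<in> par Q (Q1 Q) (Q1 Q) \<and> u \<in> par Q (Q1 Q) B" if nz: "x u \<noteq> 0" for u
  proof -
    obtain a where "a \<in> arrs Q" "u = (apath Q a, apath Q a)"
      using assms nz unfolding is_diagonal_def by blast
    then show ?thesis using arrow_pair_in_par[of a a] by simp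
  qed
  have "x \<in> kspace Q (Q1 Q) (Q1 Q)" "x \<in> kspace Q (Q1 Q) B"
    unfolding kspace_def using diag_par by auto
  then show "x \<in> L0rep Q Z" "x \<in> kspace Q (Q1 Q) B"
    by (simp_all add: L0rep_def KerPsi1_def psi1_diagonal[OF assms])
qed

lemma delta_in_L0rep:
  assumes "arrow_le Q Z e b"
  shows "(delta (apath Q b, apath Q e) :: _ \<Rightarrow> 'k::field) \<in> L0rep Q Z"
proof -
  have par: "(apath Q b, apath Q e) \<in> par Q (Q1 Q) (Q1 Q)" "(apath Q b, apath Q e) \<in> par Q (Q1 Q) B"
    using arrow_le_parallel[OF assms] arrow_pair_in_par by auto
  have rc0: "p \<in> Z \<Longrightarrow> repl_count Q Z p b (apath Q e) q = 0" for p q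
    using assms unfolding arrow_le_def by blast
  have "psi1 Q Z (delta (apath Q b, apath Q e) :: _ \<Rightarrow> 'k) = (\<lambda>_. 0)"
    by (rule ext) (simp add: psi1_delta psi1b_def rc0)
  then show ?thesis using par by (simp add: L0rep_def KerPsi1_def delta_in_kspace)
qed

text \<open>Only (b, e) contributes to the coefficient of (p, q): a replacement of one arrow by a
  different one can be read off from its result (\<open>repl_count_by_arrow_unique\<close>).\<close>
lemma psi1_at_arrow_replacement:
  fixes y :: "_ \<Rightarrow> 'k::field"
  assumes y: "y \<in> kspace Q (Q1 Q) (Q1 Q)" and p: "p \<in> Z"
    and rc: "repl_count Q Z p b (apath Q e) q \<noteq> 0" and "b \<noteq> e"
    and par: "(apath Q b, apath Q e) \<in> par Q (Q1 Q) (Q1 Q)"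
  shows "psi1 Q Z y (p, q) = y (apath Q b, apath Q e)"
proof -
  have be: "(apath Q b, apath Q e) \<in> par Q (Q1 Q) B"
    using par by (auto elim!: par_Q1_Q1_E intro: arrow_pair_in_par)
  have other: "y u * psi1b Q Z (fst u) (snd u) (p, q) = 0"
    if ne: "u \<noteq> (apath Q b, apath Q e)" for u
  proof (cases "y u = 0")
    case False
    then have "u \<in> par Q (Q1 Q) (Q1 Q)" using y kspace_vanishes by blast
    then obtain b' e' where u: "u = (apath Q b', apath Q e')" by (rule par_Q1_Q1_E)
    have "repl_count Q Z p b' (apath Q e') q = 0"
    proof (rule ccontr)
      assume "repl_count Q Z p b' (apath Q e') q \<noteq> 0"
      then have "b' = b \<and> e' = e" by (rule repl_count_by_arrow_unique[OF rc \<open>b \<noteq> e\<close>])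
      then show False using ne u by simp
    qed
    then show ?thesis using u by (simp add: psi1b_def)
  qed simp
  have rest: "(\<Sum>u\<in>par Q (Q1 Q) B - {(apath Q b, apath Q e)}. y u * psi1b Q Z (fst u) (snd u) (p, q)) = 0"
    using other by (intro sum.neutral) blast
  have "psi1 Q Z y (p, q) = (\<Sum>u\<in>par Q (Q1 Q) B. y u * psi1b Q Z (fst u) (snd u) (p, q))"
    by (simp only: psi1_def)
  also have "\<dots> = y (apath Q b, apath Q e) * psi1b Q Z (apath Q b) (apath Q e) (p, q)"
    by (simp only: sum.remove[OF finite_par_Q1_B be] rest fst_conv snd_conv add_0_right)
  also have "\<dots> = y (apath Q b, apath Q e)"
    by (simp only: psi1b_def fst_conv snd_conv apath_simps list.sel(1) if_P[OF p]
        repl_count_by_arrow_eq_1[OF rc \<open>b \<noteq> e\<close>] of_nat_1 mult_1_right)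
  finally show ?thesis .
qed

lemma L0rep_nonzero_imp_arrow_le:
  fixes y :: "_ \<Rightarrow> 'k::field"
  assumes y: "y \<in> L0rep Q Z" and nz: "y (apath Q b, apath Q e) \<noteq> 0"
  shows "arrow_le Q Z e b"
proof -
  have ks: "y \<in> kspace Q (Q1 Q) (Q1 Q)" and ker: "psi1 Q Z y = (\<lambda>_. 0)"
    using y by (auto simp: L0rep_def KerPsi1_def)
  have par: "(apath Q b, apath Q e) \<in> par Q (Q1 Q) (Q1 Q)"
    using ks nz kspace_vanishes by blast
  then have be: "b \<in> arrs Q" "e \<in> arrs Q" "src Q e = src Q b" "tgt Q e = tgt Q b"
    by (auto elim: par_Q1_Q1_E)
  show ?thesis
  proof (cases "b = e")
    case False
    have "repl_count Q Z p b (apath Q e) q = 0" if p: "p \<in> Z" for p q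
    proof (rule ccontr)
      assume "repl_count Q Z p b (apath Q e) q \<noteq> 0"
      then have "psi1 Q Z y (p, q) = y (apath Q b, apath Q e)"
        using psi1_at_arrow_replacement[OF ks p _ False par] by blast
      then show False using ker nz by simp
    qed
    then show ?thesis using be unfolding arrow_le_def parallel_apath_iff by blast
  qed (use be arrow_le_refl in simp)
qed

lemma bracket_delta:
  "bracket Q Z x (delta v) w =
     (if v \<in> par Q (Q1 Q) B then \<Sum>u\<in>par Q (Q1 Q) B. x u * bracketb Q Z u v w else 0)"
proof -
  have "(\<Sum>v'\<in>par Q (Q1 Q) B. x u * delta v v' * bracketb Q Z u v' w) =
      (if v \<in> par Q (Q1 Q) B then x u * bracketb Q Z u v w else 0)" for u
    using sum_delta_mult[OF finite_par_Q1_B, of v "\<lambda>v'. x u * bracketb Q Z u v' w"]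
    by (simp add: ac_simps)
  then show ?thesis unfolding bracket_def by simp
qed

lemma bracketb_loop_arrow_pair:
  assumes "b \<in> arrs Q" "e \<in> arrs Q" "src Q b = src Q e"
  shows "bracketb Q Z (apath Q a, apath Q a) (apath Q b, apath Q e) w =
    (if w = (apath Q b, apath Q e) then (if e = a then 1 else 0) - (if a = b then 1 else 0)
     else (0::'k::field))"
proof -
  have eB: "apath Q e \<in> B" using assms apath_in_Bset by blast
  have f: "(if fst w = apath Q b then of_nat (repl_count Q Z (apath Q e) a (apath Q a) (snd w)) else 0)
     = (if w = (apath Q b, apath Q e) \<and> e = a then 1 else (0::'k))"
    using eB unfolding repl_count_apath by (cases w) (auto simp: apath_def)
  have s: "(if fst w = apath Q a then of_nat (repl_count Q Z (apath Q a) b (apath Q e) (snd w)) else 0)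
     = (if w = (apath Q b, apath Q e) \<and> a = b then 1 else (0::'k))"
    using eB assms unfolding repl_count_apath by (cases w) (auto simp: apath_def)
  show ?thesis by (simp only: bracketb_def fst_conv snd_conv apath_simps(3) f s) simp
qed

lemma repl_count_into_arrow_nonzero:
  assumes "repl_count Q Z gam b (apath Q e) (apath Q e) \<noteq> 0"
  shows "snd gam = [b]"
proof -
  obtain i where i: "i < length (snd gam)" "snd gam ! i = b" "apath Q e = (fst gam, (snd gam)[i := e])"
    using assms by (rule repl_count_by_arrow_nonzeroE)
  then have "(snd gam)[i := e] = [e]" by (simp add: apath_def)
  then have "length ((snd gam)[i := e]) = length [e]" by (rule arg_cong)
  then have "length (snd gam) = 1" by simp
  with i(1,2) show ?thesis by (cases "snd gam") auto
qed

lemma bracketb_at_arrow_pair: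
  assumes "b \<in> arrs Q" "e \<in> arrs Q" "src Q b = src Q e" and u: "u \<in> par Q (Q1 Q) B"
  shows "bracketb Q Z u (apath Q b, apath Q e) (apath Q b, apath Q e) =
     delta (apath Q e, apath Q e) u - (delta (apath Q b, apath Q b) u :: 'k::field)"
proof -
  obtain a gam where g: "u = (apath Q a, gam)" "a \<in> arrs Q" "gam \<in> B" "fst gam = src Q a"
    using u by (rule par_Q1_B_E)
  have eB: "apath Q e \<in> B" using assms apath_in_Bset by blast
  have first: "repl_count Q Z (apath Q e) a gam (apath Q e) = (if u = (apath Q e, apath Q e) then 1 else 0)"
    unfolding repl_count_apath using g eB by (cases gam) (auto simp: apath_def)
  have second: "(if apath Q b = apath Q a then repl_count Q Z gam b (apath Q e) (apath Q e) else 0)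
      = (if u = (apath Q b, apath Q b) then 1 else 0)"
  proof (cases "a = b \<and> gam = apath Q b")
    case True
    have "repl_count Q Z (apath Q b) b (apath Q e) (apath Q e) = 1"
      using eB assms(3) by (subst repl_count_apath) (simp add: apath_def)
    then show ?thesis using True g(1) by simp
  next
    case False
    have "gam = apath Q b" if "a = b" "repl_count Q Z gam b (apath Q e) (apath Q e) \<noteq> 0"
      using repl_count_into_arrow_nonzero[OF that(2)] g(4) that(1) by (cases gam) (simp add: apath_def)
    then show ?thesis using False g(1) by auto
  qed
  have second': "(if apath Q b = apath Q a then (of_nat (repl_count Q Z gam b (apath Q e) (apath Q e)) :: 'k)
      else 0) = (if u = (apath Q b, apath Q b) then 1 else 0)"
    by (cases "apath Q b = apath Q a") (use second in auto)
  have "bracketb Q Z u (apath Q b, apath Q e) (apath Q b, apath Q e) =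
    (of_nat (repl_count Q Z (apath Q e) a gam (apath Q e)) :: 'k)
     - (if apath Q b = apath Q a then of_nat (repl_count Q Z gam b (apath Q e) (apath Q e)) else 0)"
    by (simp only: bracketb_def g(1) fst_conv snd_conv apath_simps(3) if_True simp_thms(6))
  also have "\<dots> = delta (apath Q e, apath Q e) u - delta (apath Q b, apath Q b) u"
    unfolding first second' delta_def by simp
  finally show ?thesis .
qed

lemma bracket_delta_arrow_pair:
  fixes x :: "_ \<Rightarrow> 'k::field"
  assumes "b \<in> arrs Q" "e \<in> arrs Q" "src Q b = src Q e" "tgt Q b = tgt Q e"
  shows "bracket Q Z x (delta (apath Q b, apath Q e)) (apath Q b, apath Q e) =
     x (apath Q e, apath Q e) - x (apath Q b, apath Q b)"
proof -
  have "bracket Q Z x (delta (apath Q b, apath Q e)) (apath Q b, apath Q e) =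
     (\<Sum>u\<in>par Q (Q1 Q) B. x u * bracketb Q Z u (apath Q b, apath Q e) (apath Q b, apath Q e))"
    using arrow_pair_in_par(2)[OF assms] by (simp add: bracket_delta)
  also have "\<dots> = (\<Sum>u\<in>par Q (Q1 Q) B.
      delta (apath Q e, apath Q e) u * x u - delta (apath Q b, apath Q b) u * x u)"
    by (rule sum.cong[OF refl]) (simp add: bracketb_at_arrow_pair[OF assms(1-3)] algebra_simps)
  also have "\<dots> = x (apath Q e, apath Q e) - x (apath Q b, apath Q b)"
    using arrow_pair_in_par(2)[of e e] arrow_pair_in_par(2)[of b b] assms
    by (simp add: sum_subtractf sum_delta_mult[OF finite_par_Q1_B])
  finally show ?thesis .
qed

lemma bracketb_loop:
  assumes u: "u \<in> par Q (Q1 Q) B"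
  shows "bracketb Q Z u (apath Q c, apath Q c) w = (if u = w then - of_int (deg w c) else (0::'k::field))"
proof -
  obtain a gam where g: "u = (apath Q a, gam)" "a \<in> arrs Q" "gam \<in> B" "fst gam = src Q a"
    using u by (rule par_Q1_B_E)
  have first: "(if fst w = apath Q c then of_nat (repl_count Q Z (apath Q c) a gam (snd w)) else 0)
     = (if u = w then of_nat (count_list (snd (fst w)) c) else (0::'k))"
  proof (cases "u = w")
    case True
    then have "fst w = apath Q a" "snd w = gam" "gam = (src Q a, snd gam)"
      using g by (auto simp: prod_eq_iff)
    then show ?thesis unfolding repl_count_apath using True g(3) by (cases "a = c") auto
  next
    case False
    have "\<not> (fst w = apath Q c \<and> c = a \<and> snd w = (src Q c, snd gam))"
    proof
      assume "fst w = apath Q c \<and> c = a \<and> snd w = (src Q c, snd gam)"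
      then have "w = u" using g(1,4) by (metis prod.collapse)
      then show False using False by simp
    qed
    then show ?thesis unfolding repl_count_apath using False by auto
  qed
  have second: "(if fst w = apath Q a then of_nat (repl_count Q Z gam c (apath Q c) (snd w)) else 0)
     = (if u = w then of_nat (count_list (snd (snd w)) c) else (0::'k))"
    unfolding repl_count_by_itself using g by (cases w) auto
  show ?thesis
    by (simp only: bracketb_def fst_conv snd_conv g(1) apath_simps(3))
       (use first second g(1) in \<open>simp add: deg_def\<close>)
qed

lemma bracket_delta_loop:
  fixes x :: "_ \<Rightarrow> 'k::field"
  assumes x: "x \<in> kspace Q (Q1 Q) B" and c: "c \<in> arrs Q"
  shows "bracket Q Z x (delta (apath Q c, apath Q c)) w = - of_int (deg w c) * x w"
proof -
  have "bracket Q Z x (delta (apath Q c, apath Q c)) w =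
     (\<Sum>u\<in>par Q (Q1 Q) B. x u * bracketb Q Z u (apath Q c, apath Q c) w)"
    using arrow_pair_in_par(2)[of c c] c by (simp add: bracket_delta)
  also have "\<dots> = (\<Sum>u\<in>par Q (Q1 Q) B. delta w u * x u) * - of_int (deg w c)"
    unfolding sum_distrib_right by (rule sum.cong[OF refl]) (simp add: bracketb_loop delta_def)
  also have "\<dots> = - of_int (deg w c) * x w"
    using kspace_vanishes[OF x, of w] by (subst sum_delta_mult[OF finite_par_Q1_B]) auto
  finally show ?thesis .
qed

lemma bracket_diagonal_L0rep:
  fixes x y :: "_ \<Rightarrow> 'k::field"
  assumes x: "is_diagonal x" "le_invariant x" and y: "y \<in> L0rep Q Z"
  shows "bracket Q Z x y = (\<lambda>_. 0)"
proof
  fix w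
  have yk: "y \<in> kspace Q (Q1 Q) (Q1 Q)" using y by (simp add: L0rep_def)
  have column: "(\<Sum>u\<in>par Q (Q1 Q) B. x u * y v * bracketb Q Z u v w) = 0" for v
  proof (cases "y v = 0")
    case False
    then have "v \<in> par Q (Q1 Q) (Q1 Q)" using yk kspace_vanishes by blast
    then obtain b e where v: "v = (apath Q b, apath Q e)" "b \<in> arrs Q" "e \<in> arrs Q"
      "src Q b = src Q e" by (rule par_Q1_Q1_E)
    have le: "x (apath Q e, apath Q e) = x (apath Q b, apath Q b)"
      using x(2) L0rep_nonzero_imp_arrow_le[OF y] False v(1) unfolding le_invariant_def by blast
    have t: "x u * y v * bracketb Q Z u v w = y v *
       (if w = v then delta (apath Q e, apath Q e) u * x u - delta (apath Q b, apath Q b) u * x u else 0)"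
      for u
    proof (cases "x u = 0")
      case False
      then obtain a where "u = (apath Q a, apath Q a)" using x(1) unfolding is_diagonal_def by blast
      then show ?thesis by (simp add: v(1) bracketb_loop_arrow_pair[OF v(2-4)] delta_def)
    qed simp
    have "(\<Sum>u\<in>par Q (Q1 Q) B. x u * y v * bracketb Q Z u v w) = y v *
       (if w = v then (\<Sum>u\<in>par Q (Q1 Q) B. delta (apath Q e, apath Q e) u * x u)
          - (\<Sum>u\<in>par Q (Q1 Q) B. delta (apath Q b, apath Q b) u * x u) else 0)"
      unfolding t by (simp add: sum_distrib_left[symmetric] sum_subtractf)
    also have "\<dots> = y v * (if w = v then x (apath Q e, apath Q e) - x (apath Q b, apath Q b) else 0)"
      using v arrow_pair_in_par(2)[of e e] arrow_pair_in_par(2)[of b b]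
      by (simp add: sum_delta_mult[OF finite_par_Q1_B])
    finally show ?thesis using le by simp
  qed simp
  have "bracket Q Z x y w = (\<Sum>v\<in>par Q (Q1 Q) B. \<Sum>u\<in>par Q (Q1 Q) B. x u * y v * bracketb Q Z u v w)"
    unfolding bracket_def by (rule sum.swap)
  then show "bracket Q Z x y w = 0" using column by simp
qed

subsection \<open>Connected components of classes of parallel arrows\<close>

definition linked :: "('a \<times> 'a) set" where
  "linked = {(x, y). arrow_le Q Z x y \<or> arrow_le Q Z y x}"

definition component :: "'a \<Rightarrow> 'a set" where
  "component a = {b. (a, b) \<in> linked\<^sup>*}"

lemma linked_parallel:
  "(x, y) \<in> linked \<Longrightarrow> x \<in> arrs Q \<and> y \<in> arrs Q \<and> src Q x = src Q y \<and> tgt Q x = tgt Q y"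
  unfolding linked_def using arrow_le_parallel by fastforce

lemma sym_linked: "sym linked"
  by (auto simp: linked_def intro: symI)

lemma self_in_component: "a \<in> component a"
  by (simp add: component_def)

lemma component_subset_arrow_class:
  assumes "a \<in> arrs Q"
  shows "component a \<subseteq> arrow_class Q a"
proof
  fix c assume "c \<in> component a"
  then have "(a, c) \<in> linked\<^sup>*" by (simp add: component_def)
  then show "c \<in> arrow_class Q a"
  proof (induction rule: rtrancl_induct)
    case base
    then show ?case using assms by (simp add: arrow_class_def parallel_apath_iff)
  next
    case (step y z)
    then show ?case using linked_parallel[of y z] by (simp add: arrow_class_def parallel_apath_iff)
  qed
qed

lemma component_eq_if_linked:
  assumes "(a, b) \<in> linked\<^sup>*"
  shows "component a = component b"
proof -
  have "(b, a) \<in> linked\<^sup>*" using assms sym_linked by (simp add: sym_rtrancl symD)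
  then show ?thesis using assms unfolding component_def by (blast intro: rtrancl_trans)
qed

lemma connected_component: "connected_arrows Q Z (component a)"
proof -
  let ?R = "{(x, y). x \<in> component a \<and> y \<in> component a \<and> (arrow_le Q Z x y \<or> arrow_le Q Z y x)}"
  have from_a: "(a, c) \<in> ?R\<^sup>*" if "c \<in> component a" for c
  proof -
    have "(a, c) \<in> linked\<^sup>*" using that by (simp add: component_def)
    then show ?thesis
    proof (induction rule: rtrancl_induct)
      case (step y z)
      then have "y \<in> component a" "z \<in> component a"
        by (auto simp: component_def intro: rtrancl_into_rtrancl)
      then have "(y, z) \<in> ?R" using step(2) by (auto simp: linked_def)
      then show ?case using step(3) by (rule rtrancl_into_rtrancl[rotated])
    qed simp
  qed
  have sym: "?R\<inverse> = ?R" by auto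
  have "(x, y) \<in> ?R\<^sup>*" if "x \<in> component a" "y \<in> component a" for x y
  proof -
    have "(x, a) \<in> ?R\<^sup>*" using rtrancl_converseI[OF from_a[OF that(1)]] sym by simp
    then show ?thesis using from_a[OF that(2)] by (rule rtrancl_trans)
  qed
  then show ?thesis unfolding connected_arrows_def by blast
qed

lemma connected_arrows_linked:
  assumes "connected_arrows Q Z C" "a \<in> C" "c \<in> C"
  shows "(a, c) \<in> linked\<^sup>*"
proof -
  have "(a, c) \<in> {(x, y). x \<in> C \<and> y \<in> C \<and> (arrow_le Q Z x y \<or> arrow_le Q Z y x)}\<^sup>*"
    using assms unfolding connected_arrows_def by blast
  then show ?thesis by (rule rtrancl_mono[THEN subsetD, rotated]) (auto simp: linked_def)
qed

lemma component_in_arrow_components: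
  assumes a: "a \<in> arrs Q"
  shows "component a \<in> arrow_components Q Z"
proof -
  have maximal: "D = component a"
    if "component a \<subseteq> D" "D \<subseteq> arrow_class Q a" "connected_arrows Q Z D" for D
  proof
    show "D \<subseteq> component a"
      using connected_arrows_linked[OF that(3)] that(1) self_in_component
      by (auto simp: component_def)
  qed (use that in simp)
  show ?thesis unfolding arrow_components_def
  proof (rule CollectI, rule bexI[OF _ a], intro conjI allI impI)
    fix D assume "component a \<subseteq> D \<and> D \<subseteq> arrow_class Q a \<and> connected_arrows Q Z D"
    then show "D = component a" using maximal by blast
  qed (use component_subset_arrow_class[OF a] self_in_component connected_component in auto)
qed

lemma arrow_components_eq_component:
  assumes C: "C \<in> arrow_components Q Z" and a: "a \<in> C"
  shows "C = component a"
proof -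
  obtain a0 where "C \<subseteq> arrow_class Q a0 \<and> C \<noteq> {} \<and> connected_arrows Q Z C \<and>
      (\<forall>D. C \<subseteq> D \<and> D \<subseteq> arrow_class Q a0 \<and> connected_arrows Q Z D \<longrightarrow> D = C)"
    using C unfolding arrow_components_def by blast
  then have a0: "C \<subseteq> arrow_class Q a0" "connected_arrows Q Z C"
    and maximal: "\<And>D. C \<subseteq> D \<Longrightarrow> D \<subseteq> arrow_class Q a0 \<Longrightarrow> connected_arrows Q Z D \<Longrightarrow> D = C"
    by simp_all
  have "C \<subseteq> component a"
    using connected_arrows_linked[OF a0(2) a] by (auto simp: component_def)
  moreover have "arrow_class Q a = arrow_class Q a0"
    using a0(1) a by (auto simp: arrow_class_def parallel_apath_iff)
  then have "component a \<subseteq> arrow_class Q a0"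
    using component_subset_arrow_class a0(1) a by (auto simp: arrow_class_def)
  ultimately have "component a = C" using maximal connected_component by simp
  then show ?thesis by simp
qed

lemma arrow_components_subset: "C \<in> arrow_components Q Z \<Longrightarrow> C \<subseteq> arrs Q"
  by (auto simp: arrow_components_def arrow_class_def)

lemma finite_arrow_components: "finite (arrow_components Q Z)"
proof (rule finite_subset)
  show "arrow_components Q Z \<subseteq> Pow (arrs Q)" using arrow_components_subset by blast
  show "finite (Pow (arrs Q))" using finite_quiver by (simp add: finite_quiver_def)
qed

lemma arrow_components_containing:
  assumes "a \<in> arrs Q"
  shows "{C \<in> arrow_components Q Z. a \<in> C} = {component a}"
proof
  show "{C \<in> arrow_components Q Z. a \<in> C} \<subseteq> {component a}"
    using arrow_components_eq_component by blast
  show "{component a} \<subseteq> {C \<in> arrow_components Q Z. a \<in> C}"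
    using component_in_arrow_components[OF assms] self_in_component by simp
qed

definition component_combination :: "('a set \<Rightarrow> 'k::field) \<Rightarrow> ('v, 'a) path \<times> ('v, 'a) path \<Rightarrow> 'k" where
  "component_combination c w = (\<Sum>C\<in>arrow_components Q Z. c C * comp_sum Q C w)"

lemma component_combination_loop:
  fixes c :: "'a set \<Rightarrow> 'k::field"
  assumes "a \<in> arrs Q"
  shows "component_combination c (apath Q a, apath Q a) = c (component a)"
proof -
  have loop: "comp_sum Q C (apath Q a, apath Q a) = (if a \<in> C then 1 else (0::'k))"
    if "C \<in> arrow_components Q Z" for C
  proof -
    have "finite C"
      using arrow_components_subset[OF that] finite_quiver finite_subset
      by (auto simp: finite_quiver_def)
    then show ?thesis unfolding comp_sum_def delta_def by (simp add: eq_commute[of a])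
  qed
  have "component_combination c (apath Q a, apath Q a) =
      (\<Sum>C\<in>arrow_components Q Z. if a \<in> C then c C else 0)"
    unfolding component_combination_def by (rule sum.cong[OF refl]) (simp add: loop)
  also have "\<dots> = sum c {C \<in> arrow_components Q Z. a \<in> C}"
    using finite_arrow_components by (simp add: sum.inter_filter)
  also have "\<dots> = c (component a)" using arrow_components_containing[OF assms] by simp
  finally show ?thesis .
qed

lemma component_combination_off_diagonal:
  fixes c :: "'a set \<Rightarrow> 'k::field"
  assumes "\<not> (\<exists>a\<in>arrs Q. w = (apath Q a, apath Q a))"
  shows "component_combination c w = 0"
proof -
  have "comp_sum Q C w = (0::'k)" if "C \<in> arrow_components Q Z" for C
    unfolding comp_sum_def delta_def using assms arrow_components_subset[OF that]
    by (intro sum.neutral) auto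
  then show ?thesis unfolding component_combination_def by simp
qed

lemma is_diagonal_component_combination: "is_diagonal (component_combination c)"
  unfolding is_diagonal_def using component_combination_off_diagonal by blast

lemma le_invariantD:
  "le_invariant x \<Longrightarrow> arrow_le Q Z e b \<Longrightarrow> x (apath Q e, apath Q e) = x (apath Q b, apath Q b)"
  unfolding le_invariant_def by blast

lemma le_invariant_component_combination: "le_invariant (component_combination c)"
  unfolding le_invariant_def
proof (intro allI impI)
  fix b e assume le: "arrow_le Q Z e b"
  then have "component e = component b" by (intro component_eq_if_linked) (auto simp: linked_def)
  then show "component_combination c (apath Q e, apath Q e) = component_combination c (apath Q b, apath Q b)"
    using arrow_le_parallel[OF le] by (simp add: component_combination_loop)
qed

lemma le_invariant_on_component:
  assumes "le_invariant x" "b \<in> component a"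
  shows "x (apath Q b, apath Q b) = x (apath Q a, apath Q a)"
proof -
  have "(a, b) \<in> linked\<^sup>*" using assms(2) by (simp add: component_def)
  then show ?thesis
  proof (induction rule: rtrancl_induct)
    case (step y z)
    from step(2) have "arrow_le Q Z y z \<or> arrow_le Q Z z y" by (simp add: linked_def)
    then have "x (apath Q z, apath Q z) = x (apath Q y, apath Q y)"
      using le_invariantD[OF assms(1)] by (metis (no_types))
    then show ?case using step(3) by simp
  qed simp
qed

lemma diagonal_eq_component_combination:
  assumes "is_diagonal x" "le_invariant x"
  shows "x = component_combination (\<lambda>C. x (apath Q (SOME a. a \<in> C), apath Q (SOME a. a \<in> C)))"
    (is "x = component_combination ?c")
proof
  fix w
  show "x w = component_combination ?c w"
  proof (cases "\<exists>a\<in>arrs Q. w = (apath Q a, apath Q a)")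
    case True
    then obtain a where a: "a \<in> arrs Q" "w = (apath Q a, apath Q a)" by blast
    have "(SOME a'. a' \<in> component a) \<in> component a" using self_in_component by (rule someI)
    then have "?c (component a) = x w"
      using le_invariant_on_component[OF assms(2)] a(2) by simp
    then show ?thesis using component_combination_loop[OF a(1), of ?c] a(2) by simp
  next
    case False
    then have "x w = 0" using assms(1) unfolding is_diagonal_def by blast
    then show ?thesis using component_combination_off_diagonal[OF False] by simp
  qed
qed

subsection \<open>The centre of L_0\<close>

lemma le_invariant_if_central:
  fixes x :: "_ \<Rightarrow> 'k::field"
  assumes central: "\<And>y. y \<in> L0rep Q Z \<Longrightarrow> bracket Q Z x y \<in> ImPsi0 Q Z"
  shows "le_invariant x"
  unfolding le_invariant_def
proof (intro allI impI)
  fix b e assume le: "arrow_le Q Z e b"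
  show "x (apath Q e, apath Q e) = x (apath Q b, apath Q b)"
  proof (cases "b = e")
    case False
    have "bracket Q Z x (delta (apath Q b, apath Q e)) \<in> ImPsi0 Q Z"
      using central delta_in_L0rep[OF le] by blast
    then have "bracket Q Z x (delta (apath Q b, apath Q e)) (apath Q b, apath Q e) = 0"
      using ImPsi0_vanishes_at_arrow_pair False by blast
    then show ?thesis using bracket_delta_arrow_pair[of b e x] arrow_le_parallel[OF le] by simp
  qed simp
qed

lemma diagonal_if_central:
  fixes x :: "_ \<Rightarrow> 'k::field"
  assumes x: "x \<in> L0rep Q Z"
    and central: "\<And>y. y \<in> L0rep Q Z \<Longrightarrow> bracket Q Z x y \<in> ImPsi0 Q Z"
  shows "is_diagonal x"
  unfolding is_diagonal_def
proof (intro allI impI)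
  fix u assume nz: "x u \<noteq> 0"
  have k1: "x \<in> kspace Q (Q1 Q) (Q1 Q)" and kB: "x \<in> kspace Q (Q1 Q) B"
    using x by (simp_all add: L0rep_def KerPsi1_def)
  then have "u \<in> par Q (Q1 Q) (Q1 Q)" using nz kspace_vanishes by blast
  then obtain b e where u: "u = (apath Q b, apath Q e)" "b \<in> arrs Q" by (rule par_Q1_Q1_E)
  have "b = e"
  proof (rule ccontr)
    assume ne: "b \<noteq> e"
    have "bracket Q Z x (delta (apath Q b, apath Q b)) \<in> ImPsi0 Q Z"
      using central delta_in_L0rep[OF arrow_le_refl[OF u(2)]] by blast
    then have "bracket Q Z x (delta (apath Q b, apath Q b)) (apath Q b, apath Q e) = 0"
      using ImPsi0_vanishes_at_arrow_pair ne by blast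
    moreover have "bracket Q Z x (delta (apath Q b, apath Q b)) (apath Q b, apath Q e) = x u"
      using bracket_delta_loop[OF kB u(2)] ne u(1) by (simp add: deg_arrow_pair)
    ultimately show False using nz by simp
  qed
  then show "\<exists>a\<in>arrs Q. u = (apath Q a, apath Q a)" using u by blast
qed

lemma central_L0_iff:
  fixes x :: "_ \<Rightarrow> 'k::field"
  shows "central_L0 Q Z x \<longleftrightarrow> is_diagonal x \<and> le_invariant x"
proof
  assume "central_L0 Q Z x"
  then show "is_diagonal x \<and> le_invariant x"
    using diagonal_if_central le_invariant_if_central unfolding central_L0_def by blast
next
  assume x: "is_diagonal x \<and> le_invariant x"
  then have "x \<in> L0rep Q Z" using diagonal_in_L0rep(1) by blast
  moreover have "bracket Q Z x y = (\<lambda>_. 0)" if "y \<in> L0rep Q Z" for y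
    using x bracket_diagonal_L0rep that by blast
  ultimately show "central_L0 Q Z x" unfolding central_L0_def using ImPsi0_zero[where 'k='k] by simp
qed

subsection \<open>Central elements of the first Hochschild cohomology\<close>

definition diagonal_part :: "(('v, 'a) path \<times> ('v, 'a) path \<Rightarrow> 'k::field) \<Rightarrow> ('v, 'a) path \<times> ('v, 'a) path \<Rightarrow> 'k" where
  "diagonal_part x w = (if \<exists>a\<in>arrs Q. w = (apath Q a, apath Q a) then x w else 0)"

lemma central_L0_diagonal_part:
  assumes "le_invariant x"
  shows "central_L0 Q Z (diagonal_part x)"
proof -
  have "is_diagonal (diagonal_part x)" by (simp add: is_diagonal_def diagonal_part_def)
  moreover have "le_invariant (diagonal_part x)"
    unfolding le_invariant_def
  proof (intro allI impI)
    fix b e assume le: "arrow_le Q Z e b"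
    then have "e \<in> arrs Q" "b \<in> arrs Q" using arrow_le_parallel by simp_all
    then show "diagonal_part x (apath Q e, apath Q e) = diagonal_part x (apath Q b, apath Q b)"
      using le_invariantD[OF assms le] by (auto simp: diagonal_part_def)
  qed
  ultimately show ?thesis by (simp add: central_L0_iff)
qed

lemma deg_nonzero_off_diagonal:
  assumes "w \<in> par Q (Q1 Q) B" "\<nexists>a. w = (apath Q a, apath Q a)"
  shows "deg w \<noteq> (\<lambda>_. 0)"
proof
  assume deg0: "deg w = (\<lambda>_. 0)"
  obtain b eps where w: "w = (apath Q b, eps)" "fst eps = src Q b"
    using assms(1) by (rule par_Q1_B_E)
  have "count_list (snd eps) c = count_list [b] c" for c
    using fun_cong[OF deg0, of c] w(1) by (simp add: deg_def)
  then have "snd eps = [b]" by (rule eq_singleton_if_count_list_eq)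
  then have "eps = apath Q b" using w(2) by (cases eps) (simp add: apath_def)
  then show False using assms(2) w(1) by blast
qed

lemma arrow_notin_parallel_path:
  assumes nc: "\<not> has_oriented_cycle Q" and eps: "eps \<in> B" and b: "b \<in> arrs Q"
    and s: "fst eps = src Q b" and t: "ptgt Q eps = tgt Q b" and ne: "eps \<noteq> apath Q b"
  shows "b \<notin> set (snd eps)"
proof
  assume "b \<in> set (snd eps)"
  then obtain xs ys where L: "snd eps = xs @ b # ys" by (meson split_list)
  have "is_path Q eps" using eps by (simp add: Bset_def)
  then have P: "is_path Q (fst eps, xs @ b # ys)" using L by (metis prod.collapse)
  show False
  proof (cases "ys = []")
    case False
    have "src Q b = tgt Q (hd ys)"
    proof -
      have "Suc (length xs) < length (xs @ b # ys)" using False by simp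
      with P have "src Q ((xs @ b # ys) ! length xs) = tgt Q ((xs @ b # ys) ! Suc (length xs))"
        unfolding is_path_def by (metis snd_conv)
      then show ?thesis using False by (simp add: nth_append hd_conv_nth)
    qed
    then have "psrc (fst eps, ys) = ptgt Q (fst eps, ys)"
      using s False by (simp add: psrc_def ptgt_def)
    moreover have "is_path Q (fst eps, ys)"
      using is_path_suffix[of Q _ "xs @ [b]" ys] P False by simp
    ultimately have "has_oriented_cycle Q"
      unfolding has_oriented_cycle_def using False by (intro exI[of _ "(fst eps, ys)"]) simp
    then show False using nc by simp
  next
    case True
    have "xs \<noteq> []"
    proof
      assume "xs = []"
      then have "eps = apath Q b" using L s True by (simp add: apath_def prod_eq_iff)
      then show False using ne by simp
    qed
    have "tgt Q b \<in> verts Q" using finite_quiver b by (simp add: finite_quiver_def)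
    with P \<open>xs \<noteq> []\<close> have "is_path Q (tgt Q b, xs)" by (rule is_path_prefix)
    moreover have "psrc (tgt Q b, xs) = ptgt Q (tgt Q b, xs)"
      using t L \<open>xs \<noteq> []\<close> by (simp add: psrc_def ptgt_def)
    ultimately have "has_oriented_cycle Q"
      unfolding has_oriented_cycle_def using \<open>xs \<noteq> []\<close> by (intro exI[of _ "(tgt Q b, xs)"]) simp
    then show False using nc by simp
  qed
qed

lemma deg_nonzero_in_field:
  assumes hyp: "CHAR('k::field) = 0 \<or> \<not> has_oriented_cycle Q"
    and w: "w \<in> par Q (Q1 Q) B" and nd: "\<nexists>a. w = (apath Q a, apath Q a)"
  shows "\<exists>c\<in>arrs Q. of_int (deg w c) \<noteq> (0::'k)"
proof -
  obtain b eps where g: "w = (apath Q b, eps)" "b \<in> arrs Q" "eps \<in> B"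
    "fst eps = src Q b" "ptgt Q eps = tgt Q b"
    using w by (rule par_Q1_B_E)
  from hyp show ?thesis
  proof
    assume "CHAR('k) = 0"
    then have of_int_eq_0: "of_int n = (0::'k) \<longleftrightarrow> n = 0" for n
      using of_int_eq_0_iff_char_dvd[where 'a='k, of n] by simp
    obtain c where c: "deg w c \<noteq> 0" using deg_nonzero_off_diagonal[OF w nd] by auto
    have "c = b \<or> c \<in> set (snd eps)"
    proof (rule ccontr)
      assume "\<not> (c = b \<or> c \<in> set (snd eps))"
      then have "deg w c = 0" using g(1) by (auto simp: deg_def count_list_0_iff)
      then show False using c by simp
    qed
    then have "c \<in> arrs Q" using g(2,3) by (auto simp: Bset_def is_path_def)
    then show ?thesis using c of_int_eq_0 by blast
  next
    assume nc: "\<not> has_oriented_cycle Q"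
    have "eps \<noteq> apath Q b" using nd g(1) by blast
    then have "b \<notin> set (snd eps)" using arrow_notin_parallel_path[OF nc g(3,2,4,5)] by blast
    then have "of_int (deg w b) = (- 1 :: 'k)" using g(1) by (simp add: deg_def count_list_0_iff)
    then show ?thesis using g(2) by (intro bexI[of _ b]) simp_all
  qed
qed

lemma degree_part_in_ImPsi0:
  fixes x :: "_ \<Rightarrow> 'k::field"
  assumes x: "x \<in> kspace Q (Q1 Q) B"
    and central: "\<And>y. y \<in> L0rep Q Z \<Longrightarrow> bracket Q Z x y \<in> ImPsi0 Q Z"
    and c: "c \<in> arrs Q" "of_int (d c) \<noteq> (0::'k)"
  shows "degree_part d x \<in> ImPsi0 Q Z"
proof -
  have "bracket Q Z x (delta (apath Q c, apath Q c)) \<in> ImPsi0 Q Z"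
    using central delta_in_L0rep[OF arrow_le_refl[OF c(1)]] by blast
  then have "degree_part d (bracket Q Z x (delta (apath Q c, apath Q c))) \<in> ImPsi0 Q Z"
    by (rule ImPsi0_degree_part)
  moreover have "degree_part d (bracket Q Z x (delta (apath Q c, apath Q c))) =
      (\<lambda>w. - of_int (d c) * degree_part d x w)"
    by (auto simp: degree_part_def bracket_delta_loop[OF x c(1)])
  ultimately have "(\<lambda>w. - of_int (d c) * degree_part d x w) \<in> ImPsi0 Q Z" by simp
  then have "(\<lambda>w. - 1 / of_int (d c) * (- of_int (d c) * degree_part d x w)) \<in> ImPsi0 Q Z"
    by (rule ImPsi0_scale)
  then show ?thesis using c(2) by simp
qed

lemma off_diagonal_part_eq_sum_degree_parts:
  fixes x :: "_ \<Rightarrow> 'k::field"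
  assumes x: "x \<in> kspace Q (Q1 Q) B"
  defines "D \<equiv> deg ` {w \<in> par Q (Q1 Q) B. \<nexists>a. w = (apath Q a, apath Q a)}"
  shows "x - diagonal_part x = (\<lambda>w. \<Sum>d\<in>D. degree_part d x w)"
proof
  fix w
  have "finite D" using finite_par_Q1_B by (simp add: D_def)
  then have sum: "(\<Sum>d\<in>D. degree_part d x w) = (if deg w \<in> D then x w else 0)"
    by (simp add: degree_part_def sum.delta)
  show "(x - diagonal_part x) w = (\<Sum>d\<in>D. degree_part d x w)"
  proof (cases "\<exists>a\<in>arrs Q. w = (apath Q a, apath Q a)")
    case True
    then have "deg w = (\<lambda>_. 0)" by (auto simp: deg_def)
    have "deg w \<notin> D"
    proof
      assume "deg w \<in> D"
      then obtain w' where "w' \<in> par Q (Q1 Q) B" "\<nexists>a. w' = (apath Q a, apath Q a)" "deg w = deg w'"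
        unfolding D_def by blast
      then show False using deg_nonzero_off_diagonal \<open>deg w = (\<lambda>_. 0)\<close> by metis
    qed
    then show ?thesis using sum True by (simp add: diagonal_part_def)
  next
    case False
    show ?thesis
    proof (cases "w \<in> par Q (Q1 Q) B")
      case True
      then have "\<nexists>a. w = (apath Q a, apath Q a)" using False by (auto simp: par_def)
      then have "deg w \<in> D" using True by (simp add: D_def)
      then show ?thesis using sum False by (simp add: diagonal_part_def)
    next
      case outside: False
      then show ?thesis using sum False kspace_vanishes[OF x] by (simp add: diagonal_part_def)
    qed
  qed
qed

lemma central_H1_eq_diagonal_part_mod_ImPsi0:
  fixes x :: "_ \<Rightarrow> 'k::field"
  assumes hyp: "CHAR('k) = 0 \<or> \<not> has_oriented_cycle Q" and x: "central_H1 Q Z x"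
  shows "central_L0 Q Z (diagonal_part x) \<and> x - diagonal_part x \<in> ImPsi0 Q Z"
proof -
  have xk: "x \<in> kspace Q (Q1 Q) B" using x by (simp add: central_H1_def KerPsi1_def)
  have central: "bracket Q Z x y \<in> ImPsi0 Q Z" if "y \<in> L0rep Q Z" for y
    using x that by (simp add: central_H1_def L0rep_def)
  define D where "D = deg ` {w \<in> par Q (Q1 Q) B. \<nexists>a. w = (apath Q a, apath Q a)}"
  have parts: "degree_part d x \<in> ImPsi0 Q Z" if d: "d \<in> D" for d
  proof -
    obtain w where "w \<in> par Q (Q1 Q) B" "\<nexists>a. w = (apath Q a, apath Q a)" "d = deg w"
      using d unfolding D_def by blast
    then obtain c where "c \<in> arrs Q" "of_int (d c) \<noteq> (0::'k)"
      using deg_nonzero_in_field[OF hyp] by blast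
    then show ?thesis using degree_part_in_ImPsi0[OF xk central] by blast
  qed
  have "finite D" using finite_par_Q1_B by (simp add: D_def)
  then have "x - diagonal_part x \<in> ImPsi0 Q Z"
    unfolding off_diagonal_part_eq_sum_degree_parts[OF xk] D_def[symmetric]
    using parts by (rule ImPsi0_sum)
  moreover have "central_L0 Q Z (diagonal_part x)"
    using central_L0_diagonal_part le_invariant_if_central central by blast
  ultimately show ?thesis by blast
qed

end

theorem lemma3p20:
  fixes Q :: "('v, 'a) quiver" and Z :: "('v, 'a) path set"
  assumes "finite_quiver Q" and "connected_quiver Q"
    and "admissible_Z Q Z" and "finite (Bset Q Z)"
  shows "(\<forall>x::('v, 'a) path \<times> ('v, 'a) path \<Rightarrow> 'k::alg_closed_field.
            central_L0 Q Z x \<longrightarrow>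
            (\<exists>c. x - (\<lambda>w. \<Sum>C\<in>arrow_components Q Z. c C * comp_sum Q C w) \<in> ImPsi0 Q Z))
       \<and> (\<forall>c::'a set \<Rightarrow> 'k. central_L0 Q Z (\<lambda>w. \<Sum>C\<in>arrow_components Q Z. c C * comp_sum Q C w))
       \<and> ((CHAR('k) = 0 \<or> \<not> has_oriented_cycle Q) \<longrightarrow>
            (\<forall>x::('v, 'a) path \<times> ('v, 'a) path \<Rightarrow> 'k. central_H1 Q Z x \<longrightarrow>
               (\<exists>x'. central_L0 Q Z x' \<and> x - x' \<in> ImPsi0 Q Z)))"
proof -
  interpret monomial_algebra Q Z using assms(1,3,4) by unfold_locales
  have combination: "(\<lambda>w. \<Sum>C\<in>arrow_components Q Z. c C * comp_sum Q C w) = component_combination c"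
    for c :: "'a set \<Rightarrow> 'k"
    by (simp add: component_combination_def fun_eq_iff)
  show ?thesis
    unfolding combination
  proof (intro conjI allI impI)
    fix x :: "('v, 'a) path \<times> ('v, 'a) path \<Rightarrow> 'k"
    assume "central_L0 Q Z x"
    then obtain c where "x = component_combination c"
      using diagonal_eq_component_combination central_L0_iff by blast
    then have "x - component_combination c = (\<lambda>_. 0)" by (simp add: fun_eq_iff)
    then show "\<exists>c. x - component_combination c \<in> ImPsi0 Q Z"
      using ImPsi0_zero by (intro exI[of _ c]) simp
  next
    fix c :: "'a set \<Rightarrow> 'k"
    show "central_L0 Q Z (component_combination c)"
      using central_L0_iff is_diagonal_component_combination le_invariant_component_combination by blast
  next
    fix x :: "('v, 'a) path \<times> ('v, 'a) path \<Rightarrow> 'k"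
    assume "CHAR('k) = 0 \<or> \<not> has_oriented_cycle Q" "central_H1 Q Z x"
    then show "\<exists>x'. central_L0 Q Z x' \<and> x - x' \<in> ImPsi0 Q Z"
      using central_H1_eq_diagonal_part_mod_ImPsi0 by blast
  qed
qed

end
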